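(* Let $\mathcal{S}$ be a state space, let the action space be $\mathbb{R}^D$, and let $\alpha>0$. Let $p_{\mathbf{z}}$ be a probability density on $\mathbb{R}^D$. For each state $\mathbf{s}_t\in\mathcal{S}$ let $g_\theta(\cdot\,|\,\mathbf{s}_t)=g^L_\theta\circ\cdots\circ g^1_\theta:\mathbb{R}^D\to\mathbb{R}^D$ be an invertible differentiable map with differentiable layers $g^i_\theta(\cdot\,|\,\mathbf{s}_t)$, let $\mathcal{S}_n$ be the set of indices $i$ for which $g^i_\theta$ is non-linear, write $\mathbf{a}^0=\mathbf{a}$, $\mathbf{a}^i=g^i_\theta\circ\cdots\circ g^1_\theta(\mathbf{a}|\mathbf{s}_t)$, and define $$Q_\theta(\mathbf{s}_t,\mathbf{a})=\alpha\log\Big(p_{\mathbf{z}}\big(g_\theta(\mathbf{a}|\mathbf{s}_t)\big)\prod_{i\in\mathcal{S}_n}\big|\det\mathbf{J}_{g^i_\theta}(\mathbf{a}^{i-1}|\mathbf{s}_t)\big|\Big).$$ Suppose that for each $i$, $|\det\mathbf{J}_{g^i_\theta}(\mathbf{a}^{i-1}|\mathbf{s}_t)|$ is a constant with respect to $\mathbf{a}^{i-1}$. Then $g^{-1}_\theta\big(\mathrm{argmax}_{\mathbf{z}}\,p_{\mathbf{z}}(\mathbf{z})\,\big|\,\mathbf{s}_t\big)=\mathrm{argmax}_{\mathbf{a}}\,Q_\theta(\mathbf{s}_t,\mathbf{a})$.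
   Context: $\mathbf{J}_{g^i_\theta}(\mathbf{a}^{i-1}|\mathbf{s}_t)$ denotes the Jacobian of the $i$-th layer $g^i_\theta(\cdot|\mathbf{s}_t)$ evaluated at $\mathbf{a}^{i-1}$. $g^{-1}_\theta(\cdot|\mathbf{s}_t)$ is the inverse of $g_\theta(\cdot|\mathbf{s}_t)$. Here $\mathrm{argmax}$ denotes the maximizer(s) of the given function, and $g_\theta^{-1}(\cdot|\mathbf{s}_t)$ is applied to the maximizer(s) of $p_{\mathbf{z}}$. *)

theory Defs
  imports "HOL-Analysis.Analysis"
begin

definition argmax_set :: "('a \<Rightarrow> 'b::linorder) \<Rightarrow> 'a set" where
  "argmax_set f = {x. \<forall>y. f y \<le> f x}"

definition elog :: "real \<Rightarrow> ereal" where
  "elog x = (if x > 0 then ereal (ln x) else -\<infinity>)"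

definition is_density :: "(real^'n \<Rightarrow> real) \<Rightarrow> bool" where
  "is_density p \<longleftrightarrow> (\<forall>z. 0 \<le> p z) \<and> p \<in> borel_measurable lborel
      \<and> (\<integral>\<^sup>+ z. ennreal (p z) \<partial>lborel) = 1"

text \<open>Partial compositions a^k = g^k o ... o g^1 (a | s); layers indexed 1..L.\<close>
fun partial_flow :: "(nat \<Rightarrow> 's \<Rightarrow> 'a \<Rightarrow> 'a) \<Rightarrow> 's \<Rightarrow> nat \<Rightarrow> 'a \<Rightarrow> 'a" where
  "partial_flow G s 0 = id"
| "partial_flow G s (Suc k) = G (Suc k) s \<circ> partial_flow G s k"

definition jacdet :: "(real^'n \<Rightarrow> real^'n) \<Rightarrow> real^'n \<Rightarrow> real" where
  "jacdet f x = det (matrix (frechet_derivative f (at x)))"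

definition nonlin_layers :: "(nat \<Rightarrow> 's \<Rightarrow> real^'n \<Rightarrow> real^'n) \<Rightarrow> 's \<Rightarrow> nat \<Rightarrow> nat set" where
  "nonlin_layers G s L = {i \<in> {1..L}. \<not> linear (G i s)}"

definition Qflow :: "real \<Rightarrow> (real^'n \<Rightarrow> real) \<Rightarrow> (nat \<Rightarrow> 's \<Rightarrow> real^'n \<Rightarrow> real^'n) \<Rightarrow> nat
     \<Rightarrow> 's \<Rightarrow> real^'n \<Rightarrow> ereal" where
  "Qflow \<alpha> p G L s a = ereal \<alpha> * elog (p (partial_flow G s L a) *
      (\<Prod>i\<in>nonlin_layers G s L. \<bar>jacdet (G i s) (partial_flow G s (i - 1) a)\<bar>))"

end

theory Submission
  imports Defs
begin

text \<open>If a layer had \<open>|det J| = 0\<close> everywhere, its range would be null by Sard's lemma,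
  hence so would be the range of the whole flow (the later layers are differentiable and map
  null sets to null sets), contradicting bijectivity. So the Jacobian factor of \<open>Q\<close> is a
  positive constant \<open>C\<close>, \<open>Q(a) = \<alpha> log (C p(g a))\<close> is a strictly increasing function of
  \<open>p(g a)\<close>, and the maximizers of \<open>Q\<close> are the preimages under the bijection \<open>g\<close> of those
  of \<open>p\<close>.\<close>

lemma negligible_image_noninjective_derivative:
  fixes f :: "'a::euclidean_space \<Rightarrow> 'a"
  assumes dim: "DIM('a) = CARD('m::{finite,wellorder})"
    and deriv: "\<And>x. x \<in> S \<Longrightarrow> (f has_derivative f' x) (at x within S)"
    and noninj: "\<And>x. x \<in> S \<Longrightarrow> \<not> inj (f' x)"
  shows "negligible (f ` S)"
proof -
  from dim have "DIM('a) = DIM(real^('m::{finite,wellorder}))"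
    by simp
  then obtain T :: "'a \<Rightarrow> real^('m::{finite,wellorder})" and T'
    where T: "linear T" "linear T'" "\<And>x. T' (T x) = x" "\<And>y. T (T' y) = y"
    by (metis isomorphisms_UNIV_UNIV)
  define S' where "S' = T ` S"
  have T'_S': "T' ` S' = S"
    unfolding S'_def image_image T(3) by simp
  have T'_in_S: "T' w \<in> S" if "w \<in> S'" for w
    using that T'_S' by blast
  have chain: "((T \<circ> f \<circ> T') has_derivative (T \<circ> f' (T' w) \<circ> T')) (at w within S')"
    if "w \<in> S'" for w
    by (intro diff_chain_within linear_imp_has_derivative T)
      (use deriv T'_in_S[OF that] T'_S' in auto)
  have "rank (matrix (T \<circ> f' (T' w) \<circ> T')) < CARD('m)" if "w \<in> S'" for w
  proof -
    let ?D = "T \<circ> f' (T' w) \<circ> T'"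
    have "T' w \<in> S"
      using T'_in_S[OF that] .
    obtain u v where "u \<noteq> v" "f' (T' w) u = f' (T' w) v"
      using noninj[OF \<open>T' w \<in> S\<close>] unfolding inj_def by blast
    then have "T u \<noteq> T v" "?D (T u) = ?D (T v)"
      using T(3) by (metis, simp)
    then have "\<not> inj ?D"
      unfolding inj_def by blast
    moreover have "linear ?D"
      using deriv[OF \<open>T' w \<in> S\<close>] by (intro linear_compose T(1,2) has_derivative_linear)
    ultimately show ?thesis
      using less_rank_noninjective[of "matrix ?D"] by simp
  qed
  then have "negligible ((T \<circ> f \<circ> T') ` S')"
    by (intro baby_Sard[OF order_refl chain])
  moreover have "T' differentiable_on (T \<circ> f \<circ> T') ` S'"
    by (rule linear_imp_differentiable_on[OF T(2)])
  ultimately have "negligible (T' ` (T \<circ> f \<circ> T') ` S')"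
    by (rule negligible_differentiable_image_negligible[rotated]) (simp add: dim)
  moreover have "T' ` (T \<circ> f \<circ> T') ` S' = f ` S"
    by (simp add: image_image T(3) flip: T'_S')
  ultimately show ?thesis
    by simp
qed

text \<open>Baby Sard needs a well-ordered index type; pairing with the identity moves to
  \<open>real^'n \<times> real^'n\<close>, whose dimension is that of the well-ordered \<open>'n bit0\<close>.\<close>

lemma negligible_image_Times_UNIV_singular:
  fixes g :: "real^'n \<Rightarrow> real^'n"
  assumes deriv: "\<And>x. x \<in> S \<Longrightarrow> (g has_derivative g' x) (at x within S)"
    and singular: "\<And>x. x \<in> S \<Longrightarrow> det (matrix (g' x)) = 0"
  shows "negligible (g ` S \<times> (UNIV :: (real^'n) set))"
proof -
  define h where "h = (\<lambda>q :: (real^'n) \<times> (real^'n). (g (fst q), snd q))"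
  define h' where "h' = (\<lambda>(q :: (real^'n) \<times> (real^'n)) (v :: (real^'n) \<times> (real^'n)).
    (g' (fst q) (fst v), snd v))"
  have "(h has_derivative h' q) (at q within S \<times> UNIV)" if "q \<in> S \<times> UNIV"
    for q :: "(real^'n) \<times> (real^'n)"
  proof -
    have "(g has_derivative g' (fst q)) (at (fst q) within fst ` (S \<times> UNIV))"
      using deriv that by auto
    then have "((\<lambda>q. g (fst q)) has_derivative (\<lambda>v. g' (fst q) (fst v))) (at q within S \<times> UNIV)"
      by (rule has_derivative_in_compose[OF has_derivative_fst[OF has_derivative_ident]])
    then show ?thesis
      unfolding h_def h'_def by (intro has_derivative_Pair has_derivative_snd[OF has_derivative_ident])
  qed
  moreover have "\<not> inj (h' q)" if "q \<in> S \<times> UNIV" for q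
  proof -
    have "\<not> inj (g' (fst q))"
      using that deriv singular has_derivative_linear det_nz_iff_inj by force
    then show ?thesis
      unfolding h'_def inj_def by auto
  qed
  moreover have "DIM((real^'n) \<times> (real^'n)) = CARD('n bit0)"
    by simp
  ultimately have "negligible (h ` (S \<times> UNIV))"
    by (intro negligible_image_noninjective_derivative)
  moreover have "h ` (S \<times> UNIV) = g ` S \<times> UNIV"
    by (force simp: h_def)
  ultimately show ?thesis
    by simp
qed

lemma negligible_differentiable_image_Times_UNIV:
  fixes f :: "'a::euclidean_space \<Rightarrow> 'a"
  assumes neg: "negligible (A \<times> (UNIV :: 'b::euclidean_space set))"
    and diff: "\<And>x. f differentiable (at x)"
  shows "negligible (f ` A \<times> (UNIV :: 'b set))"
proof -
  let ?h = "\<lambda>q :: 'a \<times> 'b. (f (fst q), snd q)"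
  have "(f \<circ> fst) differentiable (at q)" for q :: "'a \<times> 'b"
    by (intro differentiable_chain_at diff bounded_linear_imp_differentiable bounded_linear_fst)
  then have "?h differentiable (at q)" for q
    by (intro differentiable_Pair)
      (simp_all add: comp_def bounded_linear_imp_differentiable bounded_linear_snd)
  then have "?h differentiable_on A \<times> UNIV"
    by (simp add: differentiable_at_imp_differentiable_on)
  then have "negligible (?h ` (A \<times> UNIV))"
    by (rule negligible_differentiable_image_negligible[OF order_refl neg])
  moreover have "?h ` (A \<times> UNIV) = f ` A \<times> UNIV"
    by (auto simp: image_iff)
  ultimately show ?thesis
    by simp
qed

lemma negligible_range_partial_flow_Times_UNIV:
  fixes G :: "nat \<Rightarrow> 's \<Rightarrow> 'a::euclidean_space \<Rightarrow> 'a"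
  assumes diff: "\<And>j x. j \<in> {1..L} \<Longrightarrow> G j s differentiable (at x)"
    and i: "i \<in> {1..k}" and "k \<le> L"
    and neg: "negligible (range (G i s) \<times> (UNIV :: 'b::euclidean_space set))"
  shows "negligible (range (partial_flow G s k) \<times> (UNIV :: 'b set))"
proof -
  from i have "i \<le> k" by simp
  then show ?thesis
    using \<open>k \<le> L\<close>
  proof (induction k rule: dec_induct)
    case base
    have "partial_flow G s i = G i s \<circ> partial_flow G s (i - 1)"
      using i by (cases i) auto
    then have "range (partial_flow G s i) \<times> UNIV \<subseteq> range (G i s) \<times> (UNIV :: 'b set)"
      by auto
    then show ?case
      by (rule negligible_subset[OF neg])
  next
    case (step n)
    have "negligible (G (Suc n) s ` range (partial_flow G s n) \<times> (UNIV :: 'b set))"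
      using step i by (intro negligible_differentiable_image_Times_UNIV[OF step.IH] diff) auto
    then show ?case
      by (simp add: image_comp)
  qed
qed

lemma bij_partial_flow_ex_jacdet_nonzero:
  fixes G :: "nat \<Rightarrow> 's \<Rightarrow> real^'n \<Rightarrow> real^'n"
  assumes bij: "bij (partial_flow G s L)"
    and diff: "\<And>j x. j \<in> {1..L} \<Longrightarrow> G j s differentiable (at x)"
    and i: "i \<in> {1..L}"
  shows "\<exists>x. jacdet (G i s) x \<noteq> 0"
proof (rule ccontr)
  assume "\<not> ?thesis"
  then have neg: "negligible (range (G i s) \<times> (UNIV :: (real^'n) set))"
    using diff[OF i] frechet_derivative_works
    by (intro negligible_image_Times_UNIV_singular[where g' = "\<lambda>x. frechet_derivative (G i s) (at x)"])
      (auto simp: jacdet_def)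
  have "negligible (range (partial_flow G s L) \<times> (UNIV :: (real^'n) set))"
    by (rule negligible_range_partial_flow_Times_UNIV[where i = i and L = L]) (use diff i neg in auto)
  then show False
    using bij_is_surj[OF bij] by simp
qed

lemma argmax_set_comp_bij:
  assumes "bij F"
  shows "argmax_set (\<lambda>a. p (F a)) = inv F ` argmax_set p"
proof -
  have "argmax_set (\<lambda>a. p (F a)) = F -` argmax_set p"
    using bij_is_surj[OF assms] unfolding argmax_set_def by (auto simp: surj_def) metis
  then show ?thesis
    using bij_vimage_eq_inv_image[OF assms] by simp
qed

lemma argmax_set_cong_order:
  assumes "\<And>x y. f x \<le> f y \<longleftrightarrow> g x \<le> g y"
  shows "argmax_set f = argmax_set g"
  using assms by (simp add: argmax_set_def)

lemma elog_le_elog_iff: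
  assumes "0 \<le> x" "0 \<le> y"
  shows "elog x \<le> elog y \<longleftrightarrow> x \<le> y"
  using assms by (auto simp: elog_def)

lemma ereal_mult_elog_le_iff:
  assumes "0 < c" "0 \<le> x" "0 \<le> y"
  shows "ereal c * elog x \<le> ereal c * elog y \<longleftrightarrow> x \<le> y"
  using assms by (simp add: ereal_mult_le_mult_iff elog_le_elog_iff)

lemma Qflow_eq_if_constant_jacdet:
  assumes "\<And>i. i \<in> nonlin_layers G s L \<Longrightarrow> \<exists>c>0. \<forall>x. \<bar>jacdet (G i s) x\<bar> = c"
  shows "\<exists>C>0. \<forall>a. Qflow \<alpha> p G L s a = ereal \<alpha> * elog (p (partial_flow G s L a) * C)"
proof -
  obtain c where c: "\<And>i. i \<in> nonlin_layers G s L \<Longrightarrow> c i > 0 \<and> (\<forall>x. \<bar>jacdet (G i s) x\<bar> = c i)"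
    using assms by metis
  then show ?thesis
    by (intro exI[of _ "\<Prod>i\<in>nonlin_layers G s L. c i"]) (auto simp: Qflow_def intro: prod_pos)
qed

theorem proposition3p2:
  fixes \<alpha> :: real and p :: "real^'n \<Rightarrow> real"
    and G :: "nat \<Rightarrow> 's \<Rightarrow> real^'n \<Rightarrow> real^'n" and L :: nat and s :: 's
  assumes "\<alpha> > 0"
    and "is_density p"
    and "bij (partial_flow G s L)"
    and "\<forall>i\<in>{1..L}. \<forall>x. G i s differentiable (at x)"
    and "\<forall>i\<in>{1..L}. \<exists>c. \<forall>x. \<bar>jacdet (G i s) x\<bar> = c"
  shows "inv (partial_flow G s L) ` argmax_set p = argmax_set (Qflow \<alpha> p G L s)"
proof -
  let ?F = "partial_flow G s L"
  have jacdet_const: "\<exists>c>0. \<forall>x. \<bar>jacdet (G i s) x\<bar> = c" if "i \<in> nonlin_layers G s L" for i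
  proof -
    have i: "i \<in> {1..L}"
      using that by (simp add: nonlin_layers_def)
    obtain c where "\<forall>x. \<bar>jacdet (G i s) x\<bar> = c"
      using assms(5) i by blast
    moreover obtain x where "jacdet (G i s) x \<noteq> 0"
      using bij_partial_flow_ex_jacdet_nonzero[OF assms(3) _ i] assms(4) by blast
    ultimately show ?thesis
      by (metis zero_less_abs_iff)
  qed
  obtain C where "C > 0" and Q: "\<And>a. Qflow \<alpha> p G L s a = ereal \<alpha> * elog (p (?F a) * C)"
    using Qflow_eq_if_constant_jacdet[where G = G and s = s and L = L, OF jacdet_const] by blast
  have scaled_density_nonneg: "0 \<le> p z * C" for z
    using assms(2) \<open>C > 0\<close> by (simp add: is_density_def)
  have "argmax_set (Qflow \<alpha> p G L s) = argmax_set (\<lambda>a. p (?F a))"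
    by (rule argmax_set_cong_order)
      (simp add: Q ereal_mult_elog_le_iff scaled_density_nonneg \<open>C > 0\<close> assms(1))
  also have "\<dots> = inv ?F ` argmax_set p"
    by (rule argmax_set_comp_bij[OF assms(3)])
  finally show ?thesis
    by (rule sym)
qed

end
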